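(* Let $\mu(dx)=\frac{\mathbf 1_{(0,1)}(x)}{2\sqrt x}dx$ and $N\ge1$. Define $c_0=0$, $c_1=1$ and for $k\ge1$, $c_{k+1}=\frac{\sqrt{17c_k^2-4c_kc_{k-1}-4c_{k-1}^2}-c_k}{2}$. Then the (unique) quadratic optimal $N$-quantizer of $\mu$ is $\{x_1,\dots,x_N\}$ with $$x_k=\frac{c_k^2+c_kc_{k-1}+c_{k-1}^2}{3c_N^2},\quad k=1,\dots,N,$$ and the boundaries of its Voronoi cells are $x_{k+\frac12}=(c_k/c_N)^2$, $k=0,\dots,N$.
   Context: A quadratic optimal $N$-quantizer of a probability measure $\mu$ on $\mathbb R$ with finite second moment is a set $\Gamma$ of at most $N$ points minimizing $\int\mathrm{dist}(x,\Gamma)^2\mu(dx)$. For this $\mu$, such a quantizer is unique (known result); the Voronoi cell boundaries are the midpoints between consecutive points of the quantizer. *)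

theory Defs
  imports "HOL-Analysis.Analysis"
begin

definition qmu :: "real measure" where
  "qmu = density lborel (\<lambda>x. ennreal (indicator {0<..<1} x / (2 * sqrt x)))"

definition distortion :: "real set \<Rightarrow> ennreal" where
  "distortion \<Gamma> = (\<integral>\<^sup>+ x. ennreal ((infdist x \<Gamma>)\<^sup>2) \<partial>qmu)"

definition grid :: "nat \<Rightarrow> real set \<Rightarrow> bool" where
  "grid N \<Gamma> \<longleftrightarrow> finite \<Gamma> \<and> \<Gamma> \<noteq> {} \<and> card \<Gamma> \<le> N"

definition optimal_quantizer :: "nat \<Rightarrow> real set \<Rightarrow> bool" where
  "optimal_quantizer N \<Gamma> \<longleftrightarrow> grid N \<Gamma> \<and> (\<forall>\<Gamma>'. grid N \<Gamma>' \<longrightarrow> distortion \<Gamma> \<le> distortion \<Gamma>')"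

fun cseq :: "nat \<Rightarrow> real" where
  "cseq 0 = 0"
| "cseq (Suc 0) = 1"
| "cseq (Suc (Suc k)) =
     (sqrt (17 * (cseq (Suc k))\<^sup>2 - 4 * cseq (Suc k) * cseq k - 4 * (cseq k)\<^sup>2) - cseq (Suc k)) / 2"

end

theory Submission
  imports Defs
begin

text \<open>Substituting x = u^2 turns mu into Lebesgue measure on [0, 1], so the distortion of a
  grid G becomes the integral of dist(u^2, G)^2 over [0, 1]. By induction on n, the least value of
  this integral over [0, s] for grids of at most n points is W_n s^5, attained only at the grid
  s^2 x_1, ..., s^2 x_n. For the induction step remove the largest point y of G: if t^2 is the
  Voronoi boundary between y and the other points, the integral splits into the one for the
  remaining n points over [0, t], at least W_n t^5, and the cost of the single point y on [t, s],
  which is least when y is the centroid (s^2 + s t + t^2) / 3. Minimising the resulting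
  polynomial in t / s gives a unique minimiser t = (c_n / c_(n+1)) s, and this is where the
  recursion for c_k comes from.\<close>

lemma radicand_gt_square:
  fixes a d :: real
  assumes "0 \<le> d" "d < a"
  shows "(3 * a)\<^sup>2 < 17 * a\<^sup>2 - 4 * a * d - 4 * d\<^sup>2"
proof -
  have "a * d < a * a" using assms by (intro mult_strict_left_mono) auto
  moreover have "d * d < a * a" using assms by (intro mult_strict_mono) auto
  ultimately show ?thesis by (simp add: power2_eq_square)
qed

lemma cseq_nonneg_less_Suc: "0 \<le> cseq k \<and> cseq k < cseq (Suc k)"
proof (induction k)
  case 0
  then show ?case by simp
next
  case (Suc j)
  then have "3 * cseq (Suc j) < sqrt (17 * (cseq (Suc j))\<^sup>2 - 4 * cseq (Suc j) * cseq j - 4 * (cseq j)\<^sup>2)"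
    by (intro real_less_rsqrt radicand_gt_square) auto
  then show ?case using Suc by simp
qed

lemma cseq_nonneg: "0 \<le> cseq k"
  using cseq_nonneg_less_Suc by blast

lemma cseq_less_Suc: "cseq k < cseq (Suc k)"
  using cseq_nonneg_less_Suc by blast

lemma cseq_pos: "k \<ge> 1 \<Longrightarrow> 0 < cseq k"
  using cseq_nonneg_less_Suc[of "k - 1"] by (cases k) auto

lemma cseq_recurrence:
  "(cseq (Suc (Suc j)))\<^sup>2 + cseq (Suc j) * cseq (Suc (Suc j))
     = 4 * (cseq (Suc j))\<^sup>2 - cseq (Suc j) * cseq j - (cseq j)\<^sup>2"
proof -
  define a b d where "a = cseq (Suc j)" and "b = cseq (Suc (Suc j))" and "d = cseq j"
  define R where "R = 17 * a\<^sup>2 - 4 * a * d - 4 * d\<^sup>2"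
  have "(3 * a)\<^sup>2 < R"
    unfolding R_def a_def d_def using cseq_nonneg_less_Suc[of j] by (intro radicand_gt_square) auto
  then have "(sqrt R)\<^sup>2 = R" using zero_le_power2[of "3 * a"] by (intro real_sqrt_pow2) linarith
  moreover have "2 * b + a = sqrt R" by (simp add: R_def a_def b_def d_def field_simps)
  ultimately have "(2 * b + a)\<^sup>2 = R" by simp
  then have "b\<^sup>2 + a * b = 4 * a\<^sup>2 - a * d - d\<^sup>2" unfolding R_def by (simp add: power2_eq_square algebra_simps)
  then show ?thesis by (simp only: a_def b_def d_def)
qed

definition step_poly :: "real \<Rightarrow> real \<Rightarrow> real" where
  "step_poly A t = A * t^5 + 4 - 5 * t - 5 * t^2 + 5 * t^3 + 5 * t^4"

definition step_cofactor :: "real \<Rightarrow> real \<Rightarrow> real" where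
  "step_cofactor q x = q^3 + x * q^2 + 2 * x * q^3 + x^2 * q + 2 * x^2 * q^2 - 3 * x^2 * q^3
     + x^3 + 2 * x^3 * q - 3 * x^3 * q^2 - 4 * x^3 * q^3"

text \<open>Each negative monomial is dominated by a positive one, using x, q < 1.\<close>
lemma step_cofactor_pos:
  fixes x q :: real
  assumes "0 < x" "x < 1" "0 < q" "q < 1"
  shows "0 < step_cofactor q x"
proof -
  have le1: "y * m \<le> m" if "0 \<le> m" "y \<le> 1" for m y :: real
    using mult_right_mono[of y 1 m] that by simp
  have h1: "q * q \<le> 1" "x * q \<le> 1" "x * x \<le> 1" using assms by (auto intro: mult_le_one)
  have h2: "q * (q * q) \<le> 1" "x * (x * q) \<le> 1" "x * (q * q) \<le> 1" "x * (x * x) \<le> 1"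
    using assms h1 by (auto intro: mult_le_one)
  note monomial_simps = power2_eq_square power3_eq_cube algebra_simps h1 h2
  have "x^2 * q^3 \<le> x * q^3" using le1[of "x * q^3" x] assms by (simp add: monomial_simps)
  moreover have "x^2 * q^3 \<le> x^2 * q" using le1[of "x^2 * q" "q^2"] assms by (simp add: monomial_simps)
  moreover have "x^3 * q^2 \<le> x^3 * q" using le1[of "x^3 * q" q] assms by (simp add: monomial_simps)
  moreover have "x^3 * q^2 \<le> x^2 * q^2" using le1[of "x^2 * q^2" x] assms by (simp add: monomial_simps)
  moreover have "x^3 * q^3 \<le> x^3" using le1[of "x^3" "q^3"] assms by (simp add: power_le_one monomial_simps)
  moreover have "x^3 * q^3 \<le> x * q^2" using le1[of "x * q^2" "x^2 * q"] assms
    by (simp add: power2_eq_square power3_eq_cube algebra_simps mult_le_one)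
  moreover have "x^3 * q^3 \<le> x^2 * q^2" using le1[of "x^2 * q^2" "x * q"] assms
    by (simp add: power2_eq_square power3_eq_cube algebra_simps mult_le_one)
  moreover have "x^3 * q^3 < q^3" using assms
    by (simp add: power_strict_mono mult_less_cancel_right1 power_less_one_iff)
  ultimately show ?thesis unfolding step_cofactor_def by linarith
qed

text \<open>The hypothesis on A says that q is a critical point of step_poly A; the derivative then
  factors as 5 (t - q) step_cofactor q t / q^4.\<close>
lemma step_poly_strict_min:
  fixes A q t :: real
  assumes q: "0 < q" "q < 1" and A: "A * q^4 = 1 + 2 * q - 3 * q^2 - 4 * q^3"
    and t: "0 \<le> t" "t \<le> 1" "t \<noteq> q"
  shows "step_poly A q < step_poly A t"
proof -
  define D where "D x = 5 * A * x^4 - 5 - 10 * x + 15 * x^2 + 20 * x^3" for x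
  have deriv: "(step_poly A has_real_derivative D x) (at x)" for x
    unfolding step_poly_def D_def by (auto intro!: derivative_eq_intros simp: algebra_simps)
  have factor: "q^4 * D x = 5 * (x - q) * step_cofactor q x" for x
  proof -
    have "q^4 * D x = 5 * x^4 * (A * q^4) + q^4 * (- 5 - 10 * x + 15 * x^2 + 20 * x^3)"
      unfolding D_def by (simp add: algebra_simps)
    also have "\<dots> = 5 * (x - q) * step_cofactor q x"
      unfolding A step_cofactor_def
      by (simp add: algebra_simps power2_eq_square power3_eq_cube power4_eq_xxxx)
    finally show ?thesis .
  qed
  have D_pos: "0 < D x" if "q < x" "x < 1" for x
  proof -
    have "0 < q^4 * D x" unfolding factor using step_cofactor_pos[of x q] that q by simp
    then show ?thesis using q by (simp add: zero_less_mult_iff)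
  qed
  have D_neg: "D x < 0" if "0 < x" "x < q" for x
  proof -
    have "q^4 * D x < 0" unfolding factor using step_cofactor_pos[of x q] that q
      by (simp add: mult_less_0_iff)
    then show ?thesis using q by (simp add: mult_less_0_iff)
  qed
  show ?thesis
  proof (cases "q < t")
    case True
    obtain z where z: "q < z" "z < t" "step_poly A t - step_poly A q = (t - q) * D z"
      using MVT2[of q t "step_poly A" D] deriv True by blast
    have "0 < D z" using D_pos z t by simp
    then show ?thesis using z True by (smt (verit) mult_pos_pos)
  next
    case False
    then have tq: "t < q" using t by simp
    obtain z where z: "t < z" "z < q" "step_poly A q - step_poly A t = (q - t) * D z"
      using MVT2[of t q "step_poly A" D] deriv tq by blast
    have "D z < 0" using D_neg z t by simp
    then show ?thesis using z tq by (smt (verit) mult_pos_neg)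
  qed
qed

definition cseq_ratio :: "nat \<Rightarrow> real" where
  "cseq_ratio n = cseq n / cseq (Suc n)"

lemma cseq_ratio_pos_less_one: "n \<ge> 1 \<Longrightarrow> 0 < cseq_ratio n \<and> cseq_ratio n < 1"
  unfolding cseq_ratio_def using cseq_pos[of n] cseq_less_Suc[of n] by simp

text \<open>The closed form of W_n = W_(n-1) r^5 + interval_cost r 1 with r = c_(n-1) / c_n.\<close>
definition optimal_cost :: "nat \<Rightarrow> real" where
  "optimal_cost n = (4 - (4 * (cseq n)^2 - cseq n * cseq (n - 1) - (cseq (n - 1))^2)
     * (cseq n * cseq (n - 1) + (cseq (n - 1))^2) / (cseq n)^4) / 45"

definition interval_cost :: "real \<Rightarrow> real \<Rightarrow> real" where
  "interval_cost t s = (s^5 - t^5) / 5 - (s - t) * (s^2 + s * t + t^2)^2 / 9"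

lemma optimal_cost_critical:
  assumes "n \<ge> 1"
  shows "(45 * optimal_cost n - 4) * cseq_ratio n ^ 4
    = 1 + 2 * cseq_ratio n - 3 * cseq_ratio n ^ 2 - 4 * cseq_ratio n ^ 3"
proof -
  define a b d where "a = cseq n" and "b = cseq (Suc n)" and "d = cseq (n - 1)"
  have a: "0 < a" and b: "0 < b" using cseq_pos[of n] cseq_pos[of "Suc n"] assms a_def b_def by auto
  have r: "b^2 + a * b = 4 * a^2 - a * d - d^2"
    using cseq_recurrence[of "n - 1"] assms unfolding a_def b_def d_def by (cases n) auto
  then have r1: "4 * a^2 - a * d - d^2 = b^2 + a * b" and r2: "a * d + d^2 = 4 * a^2 - b^2 - a * b"
    by simp_all
  have "45 * optimal_cost n - 4 = - (4 * a^2 - a * d - d^2) * (a * d + d^2) / a^4"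
    unfolding optimal_cost_def a_def d_def using a a_def by (simp add: field_simps)
  also have "\<dots> = - (b^2 + a * b) * (4 * a^2 - b^2 - a * b) / a^4"
    by (simp only: r1 r2)
  finally have W: "45 * optimal_cost n - 4 = - (b^2 + a * b) * (4 * a^2 - b^2 - a * b) / a^4" .
  show ?thesis unfolding W cseq_ratio_def a_def[symmetric] b_def[symmetric] using a b
    by (simp add: field_simps power2_eq_square power3_eq_cube power4_eq_xxxx)
qed

lemma optimal_cost_Suc_step_poly:
  assumes "n \<ge> 1"
  shows "45 * optimal_cost (Suc n) = step_poly (45 * optimal_cost n - 4) (cseq_ratio n)"
proof -
  define q where "q = cseq_ratio n"
  define a b where "a = cseq n" and "b = cseq (Suc n)"
  have b: "0 < b" using cseq_pos[of "Suc n"] b_def by simp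
  have "45 * optimal_cost (Suc n) = 4 - (4 * b^2 - b * a - a^2) * (b * a + a^2) / b^4"
    unfolding optimal_cost_def a_def b_def by simp
  also have "\<dots> = 4 - 4 * q - 3 * q^2 + 2 * q^3 + q^4"
    unfolding q_def cseq_ratio_def a_def[symmetric] b_def[symmetric] using b
    by (simp add: field_simps power2_eq_square power3_eq_cube power4_eq_xxxx)
  also have "\<dots> = q * ((45 * optimal_cost n - 4) * q^4) + 4 - 5 * q - 5 * q^2 + 5 * q^3 + 5 * q^4"
    unfolding q_def optimal_cost_critical[OF assms]
    by (simp add: algebra_simps power2_eq_square power3_eq_cube power4_eq_xxxx)
  also have "\<dots> = step_poly (45 * optimal_cost n - 4) q"
    unfolding step_poly_def by (simp add: algebra_simps eval_nat_numeral)
  finally show ?thesis unfolding q_def .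
qed

text \<open>This identity is where step_poly comes from.\<close>
lemma interval_cost_step_poly:
  "0 < s \<Longrightarrow> 45 * (w * t^5 + interval_cost t s) = s^5 * step_poly (45 * w - 4) (t / s)"
  unfolding interval_cost_def step_poly_def by (simp add: field_simps eval_nat_numeral)

lemma optimal_cost_Suc_le:
  assumes n: "n \<ge> 1" and t: "0 \<le> t" "t \<le> s" and s: "0 < s"
  shows "optimal_cost (Suc n) * s^5 \<le> optimal_cost n * t^5 + interval_cost t s"
    and "optimal_cost n * t^5 + interval_cost t s = optimal_cost (Suc n) * s^5
      \<longleftrightarrow> t = cseq_ratio n * s"
proof -
  define A where "A = 45 * optimal_cost n - 4"
  define q where "q = cseq_ratio n"
  have q: "0 < q" "q < 1" using cseq_ratio_pos_less_one[OF n] q_def by auto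
  have u: "0 \<le> t / s" "t / s \<le> 1" using t s by auto
  have lhs: "45 * (optimal_cost (Suc n) * s^5) = s^5 * step_poly A q"
    using optimal_cost_Suc_step_poly[OF n] unfolding A_def q_def by simp
  have rhs: "45 * (optimal_cost n * t^5 + interval_cost t s) = s^5 * step_poly A (t / s)"
    unfolding A_def using interval_cost_step_poly[OF s] .
  have min: "step_poly A q < step_poly A (t / s)" if "t / s \<noteq> q"
    using step_poly_strict_min[OF q _ u that] optimal_cost_critical[OF n] unfolding A_def q_def by simp
  have "s^5 * step_poly A q \<le> s^5 * step_poly A (t / s)"
    using min s by (cases "t / s = q") auto
  then show "optimal_cost (Suc n) * s^5 \<le> optimal_cost n * t^5 + interval_cost t s"
    using lhs rhs by argo
  have "t / s = q \<longleftrightarrow> t = q * s" using s by (auto simp: field_simps)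
  moreover have "s^5 * step_poly A (t / s) = s^5 * step_poly A q \<longleftrightarrow> t / s = q"
    using min s by force
  ultimately show "optimal_cost n * t^5 + interval_cost t s = optimal_cost (Suc n) * s^5
      \<longleftrightarrow> t = cseq_ratio n * s"
    using lhs rhs unfolding q_def by argo
qed

definition partial_distortion :: "real set \<Rightarrow> real \<Rightarrow> real" where
  "partial_distortion G s = integral {0..s} (\<lambda>u. (infdist (u^2) G)^2)"

lemma integrable_infdist_square: "(\<lambda>u::real. (infdist (u^2) G)^2) integrable_on {a..b}"
  by (intro integrable_continuous_interval continuous_intros)

lemma partial_distortion_nonneg: "0 \<le> partial_distortion G s"
  unfolding partial_distortion_def by (rule integral_nonneg[OF integrable_infdist_square]) simp

lemma partial_distortion_zero [simp]: "partial_distortion G 0 = 0"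
  unfolding partial_distortion_def by simp

lemma integral_infdist_square_singleton:
  fixes t s y :: real
  assumes "t \<le> s"
  shows "integral {t..s} (\<lambda>u. (infdist (u^2) {y})^2)
    = interval_cost t s + (s - t) * (y - (s^2 + s * t + t^2) / 3)^2"
proof -
  define P where "P u = u^5 / 5 - 2 * y * u^3 / 3 + y^2 * u" for u :: real
  have "(P has_vector_derivative (u^2 - y)^2) (at u within {t..s})" for u
  proof -
    have "(P has_real_derivative (u^2 - y)^2) (at u)"
      unfolding P_def
      by (auto intro!: derivative_eq_intros simp: algebra_simps power2_eq_square eval_nat_numeral)
    then show ?thesis
      by (simp add: has_real_derivative_iff_has_vector_derivative has_vector_derivative_at_within)
  qed
  from fundamental_theorem_of_calculus[OF assms this]
  have "((\<lambda>u. (infdist (u^2) {y})^2) has_integral (P s - P t)) {t..s}"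
    by (simp add: dist_real_def)
  moreover have "P s - P t = interval_cost t s + (s - t) * (y - (s^2 + s * t + t^2) / 3)^2"
    unfolding P_def interval_cost_def by (simp add: field_simps eval_nat_numeral)
  ultimately show ?thesis by (simp add: integral_unique)
qed

lemma infdist_insert_greater_below:
  fixes x y :: real
  assumes fin: "finite G" and ne: "G \<noteq> {}" and gy: "\<forall>w\<in>G. w < y"
    and x: "x \<le> (y + Max G) / 2"
  shows "infdist x (insert y G) = infdist x G"
proof (rule antisym)
  show "infdist x (insert y G) \<le> infdist x G" by (rule infdist_mono) (use ne in auto)
  obtain a where a: "a \<in> insert y G" "infdist x (insert y G) = dist x a"
    using infdist_attains_inf[of "insert y G" x] fin by (auto simp: finite_imp_closed)
  have MaxG: "Max G \<in> G" using fin ne by simp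
  show "infdist x G \<le> infdist x (insert y G)"
  proof (cases "a \<in> G")
    case True
    then show ?thesis using a infdist_le by metis
  next
    case False
    then have "infdist x (insert y G) = dist x y" using a by auto
    moreover have "dist x (Max G) \<le> dist x y" using x gy MaxG by (auto simp: dist_real_def)
    ultimately show ?thesis using infdist_le[OF MaxG, of x] by linarith
  qed
qed

lemma infdist_insert_greater_above:
  fixes x y :: real
  assumes fin: "finite G" and gy: "\<forall>w\<in>G. w < y" and x: "(y + Max G) / 2 \<le> x"
  shows "infdist x (insert y G) = dist x y"
proof (rule antisym)
  show "infdist x (insert y G) \<le> dist x y" by (rule infdist_le) simp
  obtain a where a: "a \<in> insert y G" "infdist x (insert y G) = dist x a"
    using infdist_attains_inf[of "insert y G" x] fin by (auto simp: finite_imp_closed)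
  show "dist x y \<le> infdist x (insert y G)"
  proof (cases "a \<in> G")
    case True
    have "a \<le> Max G" using fin True by simp
    then show ?thesis using a x gy True by (auto simp: dist_real_def)
  next
    case False
    then show ?thesis using a by auto
  qed
qed

text \<open>Here t is the square root of the Voronoi boundary b between y and G, clipped to [0, s]:
  below t the nearest point is in G, above it it is y.\<close>
lemma partial_distortion_insert_greater:
  fixes y s :: real
  assumes fin: "finite G" and ne: "G \<noteq> {}" and gy: "\<forall>w\<in>G. w < y" and s: "0 \<le> s"
    and b: "b = (y + Max G) / 2" and t: "t = (if b \<le> 0 then 0 else min s (sqrt b))"
  shows "0 \<le> t" and "t \<le> s"
    and "partial_distortion (insert y G) s
      = partial_distortion G t + interval_cost t s + (s - t) * (y - (s^2 + s * t + t^2) / 3)^2"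
proof -
  show t0: "0 \<le> t" and ts: "t \<le> s" using t s by auto
  have "partial_distortion (insert y G) s = integral {0..t} (\<lambda>u. (infdist (u^2) (insert y G))^2)
      + integral {t..s} (\<lambda>u. (infdist (u^2) (insert y G))^2)"
    unfolding partial_distortion_def
    using Henstock_Kurzweil_Integration.integral_combine[OF t0 ts integrable_infdist_square] by simp
  also have "integral {0..t} (\<lambda>u. (infdist (u^2) (insert y G))^2) = partial_distortion G t"
    unfolding partial_distortion_def
  proof (rule integral_spike[of "{0}"])
    fix u assume u: "u \<in> {0..t} - {0}"
    then have "\<not> b \<le> 0" and "u \<le> sqrt b" using t by (auto split: if_splits)
    then have "u^2 \<le> (sqrt b)^2" using u by (intro power_mono) auto
    then have "u^2 \<le> b" using \<open>\<not> b \<le> 0\<close> by simp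
    then show "(infdist (u^2) G)^2 = (infdist (u^2) (insert y G))^2"
      using infdist_insert_greater_below[OF fin ne gy, of "u^2"] b by simp
  qed simp
  also have "integral {t..s} (\<lambda>u. (infdist (u^2) (insert y G))^2)
      = integral {t..s} (\<lambda>u. (infdist (u^2) {y})^2)"
  proof (rule integral_spike[of "{t}"])
    fix u assume u: "u \<in> {t..s} - {t}"
    have "b \<le> u^2"
    proof (cases "b \<le> 0")
      case True
      then show ?thesis using zero_le_power2[of u] by linarith
    next
      case False
      then have "sqrt b < u" using t u by auto
      then have "(sqrt b)^2 \<le> u^2" using False by (intro power_mono) auto
      then show ?thesis using False by simp
    qed
    then show "(infdist (u^2) {y})^2 = (infdist (u^2) (insert y G))^2"
      using infdist_insert_greater_above[OF fin gy, of "u^2"] b by simp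
  qed simp
  finally show "partial_distortion (insert y G) s
      = partial_distortion G t + interval_cost t s + (s - t) * (y - (s^2 + s * t + t^2) / 3)^2"
    using integral_infdist_square_singleton[OF ts] by simp
qed

definition quant_point :: "nat \<Rightarrow> nat \<Rightarrow> real" where
  "quant_point n k = ((cseq k)\<^sup>2 + cseq k * cseq (k - 1) + (cseq (k - 1))\<^sup>2) / (3 * (cseq n)\<^sup>2)"

definition opt_grid :: "nat \<Rightarrow> real \<Rightarrow> real set" where
  "opt_grid n s = (\<lambda>k. s^2 * quant_point n k) ` {1..n}"

lemma quant_point_strict_mono:
  assumes "n \<ge> 1"
  shows "strict_mono (quant_point n)"
proof (rule strict_monoI_Suc)
  fix k
  have "cseq (k - 1) \<le> cseq k"
  proof (cases k)
    case (Suc m)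
    then show ?thesis using cseq_less_Suc[of m] by simp
  qed simp
  then have c: "0 \<le> cseq (k - 1)" "cseq (k - 1) \<le> cseq k" "cseq k < cseq (Suc k)"
    using cseq_nonneg cseq_less_Suc by auto
  have "(cseq (k - 1))^2 < (cseq (Suc k))^2" using c by (intro power_strict_mono) auto
  moreover have "cseq k * cseq (k - 1) \<le> cseq (Suc k) * cseq k" using c by (intro mult_mono) auto
  moreover have "0 < 3 * (cseq n)\<^sup>2" using cseq_pos[OF assms] by simp
  ultimately show "quant_point n k < quant_point n (Suc k)"
    unfolding quant_point_def by (intro divide_strict_right_mono) simp_all
qed

lemma scaled_quant_point_strict_mono:
  "n \<ge> 1 \<Longrightarrow> 0 < s \<Longrightarrow> strict_mono (\<lambda>k. s^2 * quant_point n k)"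
  using quant_point_strict_mono by (simp add: strict_mono_def)

lemma card_opt_grid: "n \<ge> 1 \<Longrightarrow> 0 < s \<Longrightarrow> card (opt_grid n s) = n"
  unfolding opt_grid_def by (simp add: card_image strict_mono_imp_inj_on scaled_quant_point_strict_mono)

lemma Max_opt_grid: "n \<ge> 1 \<Longrightarrow> 0 < s \<Longrightarrow> Max (opt_grid n s) = s^2 * quant_point n n"
  unfolding opt_grid_def using quant_point_strict_mono[of n]
  by (intro Max_eqI) (auto simp: strict_mono_less_eq intro!: mult_left_mono)

lemma quant_point_midpoint:
  assumes "N \<ge> 1" "k \<ge> 1"
  shows "(quant_point N k + quant_point N (Suc k)) / 2 = (cseq k / cseq N)^2"
proof -
  obtain j where j: "k = Suc j" using assms by (cases k) auto
  have sum: "(cseq k)^2 + cseq k * cseq (k - 1) + (cseq (k - 1))^2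
      + ((cseq (Suc k))^2 + cseq (Suc k) * cseq k + (cseq k)^2) = 6 * (cseq k)^2"
    unfolding j using cseq_recurrence[of j] by (simp add: algebra_simps)
  have "(quant_point N k + quant_point N (Suc k)) / 2
      = ((cseq k)^2 + cseq k * cseq (k - 1) + (cseq (k - 1))^2
        + ((cseq (Suc k))^2 + cseq (Suc k) * cseq k + (cseq k)^2)) / (6 * (cseq N)^2)"
    unfolding quant_point_def by (simp add: add_divide_distrib)
  also have "\<dots> = 6 * (cseq k)^2 / (6 * (cseq N)^2)"
    by (simp only: sum)
  finally show ?thesis by (simp add: power_divide)
qed

lemma quant_point_rescale:
  "n \<ge> 1 \<Longrightarrow> (cseq_ratio n * s)^2 * quant_point n k = s^2 * quant_point (Suc n) k"
  unfolding quant_point_def cseq_ratio_def using cseq_pos[of n] cseq_pos[of "Suc n"]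
  by (simp add: field_simps power2_eq_square)

lemma quant_point_top:
  "n \<ge> 1 \<Longrightarrow> s^2 * quant_point (Suc n) (Suc n)
    = (s^2 + s * (cseq_ratio n * s) + (cseq_ratio n * s)^2) / 3"
  unfolding quant_point_def cseq_ratio_def using cseq_pos[of "Suc n"]
  by (simp add: field_simps power2_eq_square)

lemma opt_grid_Suc:
  assumes "n \<ge> 1"
  shows "opt_grid (Suc n) s = insert (s^2 * quant_point (Suc n) (Suc n)) (opt_grid n (cseq_ratio n * s))"
proof -
  have "{1..Suc n} = insert (Suc n) {1..n}" by auto
  then show ?thesis
    unfolding opt_grid_def using quant_point_rescale[OF assms] by (simp add: image_image)
qed

lemma opt_grid_less_top:
  assumes "n \<ge> 1" "0 < s" "w \<in> opt_grid n (cseq_ratio n * s)"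
  shows "w < s^2 * quant_point (Suc n) (Suc n)"
proof -
  obtain k where "k \<le> n" "w = s^2 * quant_point (Suc n) k"
    using assms(3) quant_point_rescale[OF assms(1)] unfolding opt_grid_def by auto
  then show ?thesis using quant_point_strict_mono[of "Suc n"] assms by (simp add: strict_mono_less)
qed

lemma opt_grid_one: "opt_grid 1 s = {s^2 / 3}"
  unfolding opt_grid_def quant_point_def by simp

lemma partial_distortion_singleton:
  "0 \<le> s \<Longrightarrow> partial_distortion {y} s = optimal_cost 1 * s^5 + s * (y - s^2 / 3)^2"
  unfolding partial_distortion_def using integral_infdist_square_singleton[of 0 s y]
  by (simp add: optimal_cost_def interval_cost_def field_simps eval_nat_numeral)

lemma optimal_cost_Suc_less:
  assumes "n \<ge> 1" "0 < s"
  shows "optimal_cost (Suc n) * s^5 < optimal_cost n * s^5"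
proof -
  have "s \<noteq> cseq_ratio n * s" using cseq_ratio_pos_less_one[OF assms(1)] assms(2) by simp
  then show ?thesis using optimal_cost_Suc_le[OF assms(1) _ order.refl assms(2)] assms(2)
    by (simp add: interval_cost_def less_le)
qed

lemma partial_distortion_remove_Max:
  assumes fin: "finite G" and card: "card G = Suc n" and n: "n \<ge> 1" and s: "0 \<le> s"
  obtains y G' t where "G = insert y G'" "finite G'" "G' \<noteq> {}" "card G' = n" "0 \<le> t" "t \<le> s"
    "partial_distortion G s
      = partial_distortion G' t + interval_cost t s + (s - t) * (y - (s^2 + s * t + t^2) / 3)^2"
proof -
  define y G' where "y = Max G" and "G' = G - {y}"
  have "G \<noteq> {}" using card by auto
  then have yG: "y \<in> G" unfolding y_def using fin by simp
  have G': "finite G'" "card G' = n" "\<forall>w\<in>G'. w < y"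
    unfolding G'_def y_def using fin card yG by (auto simp: less_le y_def)
  then have "G' \<noteq> {}" using n by auto
  define b where "b = (y + Max G') / 2"
  define t where "t = (if b \<le> 0 then 0 else min s (sqrt b))"
  have "G = insert y G'" unfolding G'_def using yG by auto
  with partial_distortion_insert_greater[OF G'(1) \<open>G' \<noteq> {}\<close> G'(3) s b_def t_def] show ?thesis
    using that[of y G' t] G' \<open>G' \<noteq> {}\<close> by simp
qed

lemma partial_distortion_opt_grid:
  "n \<ge> 1 \<Longrightarrow> 0 < s \<Longrightarrow> partial_distortion (opt_grid n s) s = optimal_cost n * s^5"
proof (induction n arbitrary: s rule: nat_induct_at_least)
  case base
  then show ?case using partial_distortion_singleton[of s "s^2 / 3"] opt_grid_one[of s] by simp
next
  case (Suc n)
  define t where "t = cseq_ratio n * s"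
  define y where "y = s^2 * quant_point (Suc n) (Suc n)"
  have t: "0 < t" "t < s" using cseq_ratio_pos_less_one[OF Suc.hyps] Suc.prems unfolding t_def by auto
  have G: "finite (opt_grid n t)" "opt_grid n t \<noteq> {}" "\<forall>w\<in>opt_grid n t. w < y"
    using opt_grid_less_top[OF Suc.hyps Suc.prems] Suc.hyps unfolding opt_grid_def t_def y_def by auto
  have "Max (opt_grid n t) = s^2 * quant_point (Suc n) n"
    using Max_opt_grid[OF Suc.hyps t(1)] quant_point_rescale[OF Suc.hyps] unfolding t_def by simp
  then have "(y + Max (opt_grid n t)) / 2
      = s^2 * ((quant_point (Suc n) n + quant_point (Suc n) (Suc n)) / 2)"
    unfolding y_def by (simp add: algebra_simps)
  also have "\<dots> = t^2"
    using quant_point_midpoint[of "Suc n" n] Suc.hyps unfolding t_def cseq_ratio_def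
    by (simp add: power_mult_distrib power_divide)
  finally have "(y + Max (opt_grid n t)) / 2 = t^2" .
  then have split: "t = (if (y + Max (opt_grid n t)) / 2 \<le> 0 then 0
      else min s (sqrt ((y + Max (opt_grid n t)) / 2)))"
    using t by simp
  have "y = (s^2 + s * t + t^2) / 3" unfolding y_def t_def by (rule quant_point_top[OF Suc.hyps])
  then have "partial_distortion (opt_grid (Suc n) s) s
      = partial_distortion (opt_grid n t) t + interval_cost t s"
    using partial_distortion_insert_greater(3)[OF G less_imp_le[OF Suc.prems] refl split]
    unfolding opt_grid_Suc[OF Suc.hyps] y_def t_def by simp
  also have "\<dots> = optimal_cost (Suc n) * s^5"
    using Suc.IH[OF t(1)] optimal_cost_Suc_le(2)[OF Suc.hyps less_imp_le[OF t(1)] less_imp_le[OF t(2)] Suc.prems]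
    unfolding t_def by simp
  finally show ?case .
qed

lemma optimal_cost_le_partial_distortion:
  "n \<ge> 1 \<Longrightarrow> finite G \<Longrightarrow> G \<noteq> {} \<Longrightarrow> card G \<le> n \<Longrightarrow> 0 \<le> s
    \<Longrightarrow> optimal_cost n * s^5 \<le> partial_distortion G s"
proof (induction n arbitrary: G s rule: nat_induct_at_least)
  case base
  then have "card G = 1" by (simp add: le_Suc_eq card_gt_0_iff)
  then obtain y where "G = {y}" by (rule card_1_singletonE)
  then show ?case using partial_distortion_singleton[OF base.prems(4)] base.prems(4) by simp
next
  case (Suc n)
  consider "s = 0" | "0 < s" "card G \<le> n" | "0 < s" "card G = Suc n"
    using Suc.prems by linarith
  then show ?case
  proof cases
    case 2
    have "optimal_cost n * s^5 \<le> partial_distortion G s"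
      using Suc.IH[OF Suc.prems(1,2) 2(2) Suc.prems(4)] .
    then show ?thesis using optimal_cost_Suc_less[OF Suc.hyps 2(1)] by linarith
  next
    case 3
    obtain y G' t where "G = insert y G'" "finite G'" "G' \<noteq> {}" "card G' = n" "0 \<le> t" "t \<le> s"
      "partial_distortion G s
        = partial_distortion G' t + interval_cost t s + (s - t) * (y - (s^2 + s * t + t^2) / 3)^2"
      by (rule partial_distortion_remove_Max[OF Suc.prems(1) 3(2) Suc.hyps Suc.prems(4)])
    moreover have "optimal_cost n * t^5 \<le> partial_distortion G' t"
      using Suc.IH calculation by simp
    moreover have "optimal_cost (Suc n) * s^5 \<le> optimal_cost n * t^5 + interval_cost t s"
      using optimal_cost_Suc_le(1)[OF Suc.hyps] calculation 3 by simp
    moreover have "0 \<le> (s - t) * (y - (s^2 + s * t + t^2) / 3)^2" using calculation by simp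
    ultimately show ?thesis by linarith
  qed simp
qed

lemma partial_distortion_eq_optimal_cost_imp:
  "n \<ge> 1 \<Longrightarrow> finite G \<Longrightarrow> G \<noteq> {} \<Longrightarrow> card G \<le> n \<Longrightarrow> 0 < s
    \<Longrightarrow> partial_distortion G s = optimal_cost n * s^5 \<Longrightarrow> G = opt_grid n s"
proof (induction n arbitrary: G s rule: nat_induct_at_least)
  case base
  then have "card G = 1" by (simp add: le_Suc_eq card_gt_0_iff)
  then obtain y where G: "G = {y}" by (rule card_1_singletonE)
  then have "s * (y - s^2 / 3)^2 = 0"
    using partial_distortion_singleton[of s y] base.prems by simp
  then have "y = s^2 / 3" using base.prems by simp
  then show ?case using G opt_grid_one[of s] by simp
next
  case (Suc n)
  have card: "card G = Suc n"
  proof (rule ccontr)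
    assume "card G \<noteq> Suc n"
    then have "card G \<le> n" using Suc.prems(3) by simp
    then have "optimal_cost n * s^5 \<le> partial_distortion G s"
      using optimal_cost_le_partial_distortion[OF Suc.hyps Suc.prems(1,2) _ less_imp_le[OF Suc.prems(4)]]
      by blast
    then show False using optimal_cost_Suc_less[OF Suc.hyps Suc.prems(4)] Suc.prems(5) by linarith
  qed
  obtain y G' t where G: "G = insert y G'" and G': "finite G'" "G' \<noteq> {}" "card G' = n"
    and t: "0 \<le> t" "t \<le> s" and
      split: "partial_distortion G s
        = partial_distortion G' t + interval_cost t s + (s - t) * (y - (s^2 + s * t + t^2) / 3)^2"
    by (rule partial_distortion_remove_Max[OF Suc.prems(1) card Suc.hyps less_imp_le[OF Suc.prems(4)]])
  have "optimal_cost n * t^5 \<le> partial_distortion G' t"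
    using optimal_cost_le_partial_distortion[OF Suc.hyps G'(1,2) _ t(1)] G'(3) by simp
  moreover have "optimal_cost (Suc n) * s^5 \<le> optimal_cost n * t^5 + interval_cost t s"
    using optimal_cost_Suc_le(1)[OF Suc.hyps t] Suc.prems(4) .
  moreover have "0 \<le> (s - t) * (y - (s^2 + s * t + t^2) / 3)^2" using t by simp
  ultimately have cost_eq: "optimal_cost n * t^5 + interval_cost t s = optimal_cost (Suc n) * s^5"
    and G'_eq: "partial_distortion G' t = optimal_cost n * t^5"
    and y_eq: "(s - t) * (y - (s^2 + s * t + t^2) / 3)^2 = 0"
    using split Suc.prems(5) by linarith+
  have t_eq: "t = cseq_ratio n * s"
    using optimal_cost_Suc_le(2)[OF Suc.hyps t Suc.prems(4)] cost_eq by simp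
  then have t_pos: "0 < t" and "t < s"
    using cseq_ratio_pos_less_one[OF Suc.hyps] Suc.prems(4) by auto
  have G'_opt: "G' = opt_grid n t" using Suc.IH[OF G'(1,2) _ t_pos G'_eq] G'(3) by simp
  have "y = (s^2 + s * t + t^2) / 3" using y_eq \<open>t < s\<close> by simp
  then have y_top: "y = s^2 * quant_point (Suc n) (Suc n)"
    using quant_point_top[OF Suc.hyps, of s] t_eq by simp
  show ?case unfolding G G'_opt y_top opt_grid_Suc[OF Suc.hyps] t_eq ..
qed

lemma nn_integral_qmu_square_substitution:
  fixes f :: "real \<Rightarrow> real"
  assumes [measurable]: "f \<in> borel_measurable borel" and f_nonneg: "\<And>x. 0 \<le> f x"
  shows "(\<integral>\<^sup>+ x. ennreal (f x) \<partial>qmu) = (\<integral>\<^sup>+ u. ennreal (indicator {0..1} u * f (u^2)) \<partial>lborel)"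
proof -
  define h where "h x = f x / (2 * sqrt x)" for x :: real
  have [measurable]: "h \<in> borel_measurable borel" unfolding h_def by measurable
  have "(\<integral>\<^sup>+ x. ennreal (f x) \<partial>qmu)
      = (\<integral>\<^sup>+ x. ennreal (indicator {0<..<1} x / (2 * sqrt x)) * ennreal (f x) \<partial>lborel)"
    unfolding qmu_def by (subst nn_integral_density) auto
  also have "\<dots> = (\<integral>\<^sup>+ x. ennreal (h x * indicator {0..1} x) \<partial>lborel)"
  proof (rule nn_integral_cong_AE)
    show "AE x in lborel. ennreal (indicator {0<..<1} x / (2 * sqrt x)) * ennreal (f x)
        = ennreal (h x * indicator {0..1} x)"
      using AE_lborel_singleton[of 1]
    proof eventually_elim
      case (elim x)
      have "ennreal (indicator {0<..<1} x / (2 * sqrt x)) * ennreal (f x)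
          = ennreal (indicator {0<..<1} x / (2 * sqrt x) * f x)"
        by (rule ennreal_mult''[symmetric]) (simp add: f_nonneg)
      also have "indicator {0<..<1} x / (2 * sqrt x) * f x = h x * indicator {0..1} x"
        using elim unfolding h_def by (cases "x = 0") (auto simp: indicator_def)
      finally show ?case .
    qed
  qed
  also have "\<dots> = (\<integral>\<^sup>+ u. ennreal (h (u^2) * (2 * u) * indicator {0..1} u) \<partial>lborel)"
  proof -
    have "(\<integral>\<^sup>+ x. ennreal (h x * indicator {(0::real)^2..1^2} x) \<partial>lborel)
        = (\<integral>\<^sup>+ u. ennreal (h (u^2) * (2 * u) * indicator {0..1} u) \<partial>lborel)"
      by (rule nn_integral_substitution[where g="\<lambda>u. u^2" and g'="\<lambda>u. 2 * u" and a=0 and b=1])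
        (auto intro!: derivative_eq_intros continuous_on_mult_left continuous_on_id
          simp: set_borel_measurable_def)
    then show ?thesis by simp
  qed
  also have "\<dots> = (\<integral>\<^sup>+ u. ennreal (indicator {0..1} u * f (u^2)) \<partial>lborel)"
  proof (rule nn_integral_cong_AE)
    show "AE u in lborel. ennreal (h (u^2) * (2 * u) * indicator {0..1} u)
        = ennreal (indicator {0..1} u * f (u^2))"
      using AE_lborel_singleton[of 0] by eventually_elim (auto simp: h_def indicator_def)
  qed
  finally show ?thesis .
qed

lemma borel_measurable_infdist_square [measurable]:
  "(\<lambda>x::real. (infdist x G)^2) \<in> borel_measurable borel"
  by (intro borel_measurable_continuous_onI continuous_intros)

lemma distortion_eq_partial_distortion: "distortion G = ennreal (partial_distortion G 1)"
proof -
  have "distortion G = (\<integral>\<^sup>+ u. ennreal (indicator {0..1} u * (infdist (u^2) G)^2) \<partial>lborel)"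
    unfolding distortion_def by (rule nn_integral_qmu_square_substitution) simp_all
  also have "\<dots> = ennreal (partial_distortion G 1)"
  proof (rule nn_integral_has_integral_lborel)
    have "((\<lambda>u. (infdist (u^2) G)^2) has_integral partial_distortion G 1) {0..1}"
      unfolding partial_distortion_def using integrable_infdist_square by (rule integrable_integral)
    then have "((\<lambda>u. if u \<in> {0..1} then (infdist (u^2) G)^2 else 0) has_integral partial_distortion G 1) UNIV"
      unfolding has_integral_restrict_UNIV .
    then show "((\<lambda>u. indicator {0..1} u * (infdist (u^2) G)^2) has_integral partial_distortion G 1) UNIV"
      by (rule has_integral_eq[rotated]) (simp add: indicator_def)
  qed simp_all
  finally show ?thesis .
qed

theorem mainTheorem13:
  fixes N :: nat and x :: "nat \<Rightarrow> real"
  assumes "N \<ge> 1"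
    and "\<And>k. x k = ((cseq k)\<^sup>2 + cseq k * cseq (k - 1) + (cseq (k - 1))\<^sup>2) / (3 * (cseq N)\<^sup>2)"
  shows "optimal_quantizer N (x ` {1..N})
    \<and> (\<forall>\<Gamma>. optimal_quantizer N \<Gamma> \<longrightarrow> \<Gamma> = x ` {1..N})
    \<and> strict_mono_on {1..N} x
    \<and> (\<forall>k\<in>{1..<N}. (x k + x (k + 1)) / 2 = (cseq k / cseq N)\<^sup>2)
    \<and> (cseq 0 / cseq N)\<^sup>2 = 0 \<and> (cseq N / cseq N)\<^sup>2 = 1"
proof -
  have x: "x = quant_point N" using assms(2) unfolding quant_point_def by auto
  have "card (opt_grid N 1) = N" using card_opt_grid[OF assms(1)] by simp
  then have grid: "grid N (opt_grid N 1)" unfolding grid_def using assms(1) by (auto simp: opt_grid_def)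
  have opt_value: "partial_distortion (opt_grid N 1) 1 = optimal_cost N"
    using partial_distortion_opt_grid[OF assms(1)] by simp
  have lower: "optimal_cost N \<le> partial_distortion G 1" if "grid N G" for G
    using optimal_cost_le_partial_distortion[OF assms(1), of G 1] that unfolding grid_def by simp
  have optimal: "optimal_quantizer N (opt_grid N 1)"
    unfolding optimal_quantizer_def distortion_eq_partial_distortion opt_value
    using grid lower ennreal_leI by blast
  have unique: "G = opt_grid N 1" if "optimal_quantizer N G" for G
  proof -
    have G: "grid N G" and le: "distortion G \<le> distortion (opt_grid N 1)"
      using that grid unfolding optimal_quantizer_def by auto
    from le have "ennreal (partial_distortion G 1) \<le> ennreal (optimal_cost N)"
      unfolding distortion_eq_partial_distortion opt_value .
    moreover have "0 \<le> optimal_cost N" using partial_distortion_nonneg[of "opt_grid N 1" 1] opt_value by simp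
    ultimately have "partial_distortion G 1 = optimal_cost N" using lower[OF G] by simp
    then show ?thesis
      using partial_distortion_eq_optimal_cost_imp[OF assms(1)] G unfolding grid_def by simp
  qed
  have image: "x ` {1..N} = opt_grid N 1" unfolding x opt_grid_def by simp
  have "strict_mono_on {1..N} x"
    using quant_point_strict_mono[OF assms(1)] unfolding x strict_mono_def strict_mono_on_def by blast
  moreover have "\<forall>k\<in>{1..<N}. (x k + x (k + 1)) / 2 = (cseq k / cseq N)\<^sup>2"
    using quant_point_midpoint[OF assms(1)] unfolding x by simp
  moreover have "(cseq 0 / cseq N)\<^sup>2 = 0" and "(cseq N / cseq N)\<^sup>2 = 1"
    using cseq_pos[OF assms(1)] by simp_all
  ultimately show ?thesis unfolding image using optimal unique by blast
qed

end
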